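(* Let $G$ be any finite multiset of phase-free $n$-qubit Pauli strings and let $P\in\{I,X,Y,Z\}^n$ be any Pauli string. For $A\subseteq\operatorname{supp}(P)$ define $\mathcal{L}_P(A)=\{a:A\to\{X,Y,Z\}: a(j)\neq P_j\text{ for every }j\in A\}$, $D_G(A,a)=|\{Q\in G: A\subseteq\operatorname{supp}(Q)\text{ and }Q_j=a(j)\text{ for all }j\in A\}|$ (with multiplicity), and $F_G(P,A)=\sum_{a\in\mathcal{L}_P(A)}D_G(A,a)$. Let \[ Z_G(P)=\sum_{A\subseteq\operatorname{supp}(P)}(-2)^{|A|}F_G(P,A),\qquad \operatorname{anti}_G(P)=\frac{|G|-Z_G(P)}{2}. \] Then $\operatorname{anti}_G(P)$ equals the number of strings $Q\in G$ (counted with multiplicity) that anticommute with $P$, i.e. satisfy $PQ=-QP$ as $2^n\times 2^n$ matrices.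
   Context: A phase-free $n$-qubit Pauli string is a word $P=(P_1,\dots,P_n)\in\{I,X,Y,Z\}^n$ with $I$ the $2\times2$ identity, $X=\begin{pmatrix}0&1\\1&0\end{pmatrix}$, $Y=\begin{pmatrix}0&-i\\ i&0\end{pmatrix}$, $Z=\begin{pmatrix}1&0\\0&-1\end{pmatrix}$; it is identified with the matrix $P_1\otimes\cdots\otimes P_n$. Its support is $\operatorname{supp}(P)=\{j: P_j\neq I\}$. $|G|$ denotes the size of the multiset $G$ counted with multiplicity. *)

theory Defs
  imports Complex_Main "HOL-Library.Multiset" "HOL-Library.FuncSet" "Jordan_Normal_Form.Matrix"
begin

datatype pauli = I | X | Y | Z

definition pauli_matrix :: "pauli \<Rightarrow> complex mat" where
  "pauli_matrix p = (case p of
      I \<Rightarrow> mat_of_rows_list 2 [[1, 0], [0, 1]]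
    | X \<Rightarrow> mat_of_rows_list 2 [[0, 1], [1, 0]]
    | Y \<Rightarrow> mat_of_rows_list 2 [[0, -\<i>], [\<i>, 0]]
    | Z \<Rightarrow> mat_of_rows_list 2 [[1, 0], [0, -1]])"

definition kron :: "'a::times mat \<Rightarrow> 'a mat \<Rightarrow> 'a mat" where
  "kron A B = mat (dim_row A * dim_row B) (dim_col A * dim_col B)
     (\<lambda>(i, j). A $$ (i div dim_row B, j div dim_col B) * B $$ (i mod dim_row B, j mod dim_col B))"

definition pauli_string_matrix :: "pauli list \<Rightarrow> complex mat" where
  "pauli_string_matrix P = foldr (\<lambda>p M. kron (pauli_matrix p) M) P (1\<^sub>m 1)"

definition anticommute :: "pauli list \<Rightarrow> pauli list \<Rightarrow> bool" where
  "anticommute P Q \<longleftrightarrow>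
     pauli_string_matrix P * pauli_string_matrix Q = - (pauli_string_matrix Q * pauli_string_matrix P)"

definition supp :: "pauli list \<Rightarrow> nat set" where
  "supp P = {j. j < length P \<and> P ! j \<noteq> I}"

definition LP :: "pauli list \<Rightarrow> nat set \<Rightarrow> (nat \<Rightarrow> pauli) set" where
  "LP P A = {a \<in> A \<rightarrow>\<^sub>E {X, Y, Z}. \<forall>j\<in>A. a j \<noteq> P ! j}"

definition DG :: "pauli list multiset \<Rightarrow> nat set \<Rightarrow> (nat \<Rightarrow> pauli) \<Rightarrow> nat" where
  "DG G A a = size (filter_mset (\<lambda>Q. A \<subseteq> supp Q \<and> (\<forall>j\<in>A. Q ! j = a j)) G)"

definition FG :: "pauli list multiset \<Rightarrow> pauli list \<Rightarrow> nat set \<Rightarrow> nat" where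
  "FG G P A = (\<Sum>a\<in>LP P A. DG G A a)"

definition ZG :: "pauli list multiset \<Rightarrow> pauli list \<Rightarrow> int" where
  "ZG G P = (\<Sum>A\<in>Pow (supp P). (-2) ^ card A * int (FG G P A))"

definition antiG :: "pauli list multiset \<Rightarrow> pauli list \<Rightarrow> real" where
  "antiG G P = (real (size G) - real_of_int (ZG G P)) / 2"

end

theory Submission
  imports Defs
begin

text \<open>Two single-qubit Pauli matrices anticommute exactly when both are non-identity and
distinct, and commute otherwise; since Kronecker products multiply these signs, Pauli strings
P and Q anticommute iff the set S(P, Q) of sites where they anticommute locally has odd size.
For A contained in supp P, the only labelling in L_P(A) that a string Q can match is Q
restricted to A, and it is admissible iff A is contained in S(P, Q). Hence each Q contributes
the sum of (-2)^|A| over all subsets A of S(P, Q) to Z_G(P), which is (-1)^|S(P, Q)|, so that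
Z_G(P) = |G| - 2 anti_G(P).\<close>

lemma div_mod_less_of_less_mult: "(i::nat) < a * b \<Longrightarrow> i div b < a \<and> i mod b < b"
  by (metis less_mult_imp_div_less mod_less_divisor mult_0_right neq0_conv not_less0)

lemma sum_lessThan_mult_div_mod:
  fixes a b :: nat and g :: "nat \<Rightarrow> nat \<Rightarrow> 'a::comm_monoid_add"
  shows "(\<Sum>k<a * b. g (k div b) (k mod b)) = (\<Sum>i<a. \<Sum>j<b. g i j)"
proof -
  have "bij_betw (\<lambda>k. (k div b, k mod b)) {..<a * b} ({..<a} \<times> {..<b})"
  proof (rule bij_betwI[where g = "\<lambda>(i, j). i * b + j"])
    have "i * b + j < a * b" if "i < a" "j < b" for i j
    proof -
      have "i * b + j < Suc i * b" using that(2) by simp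
      also have "\<dots> \<le> a * b" using that(1) by (intro mult_le_mono1) simp
      finally show ?thesis .
    qed
    then show "(\<lambda>(i, j). i * b + j) \<in> {..<a} \<times> {..<b} \<rightarrow> {..<a * b}"
      by auto
  qed (auto dest: div_mod_less_of_less_mult)
  then show ?thesis
    using sum.reindex_bij_betw[of "\<lambda>k. (k div b, k mod b)" "{..<a * b}" "{..<a} \<times> {..<b}"
        "case_prod g"]
    by (simp add: sum.cartesian_product)
qed

lemma dim_kron [simp]:
  "dim_row (kron A B) = dim_row A * dim_row B"
  "dim_col (kron A B) = dim_col A * dim_col B"
  by (simp_all add: kron_def)

lemma index_kron:
  "i < dim_row A * dim_row B \<Longrightarrow> j < dim_col A * dim_col B \<Longrightarrow>
   kron A B $$ (i, j) = A $$ (i div dim_row B, j div dim_col B) * B $$ (i mod dim_row B, j mod dim_col B)"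
  by (simp add: kron_def)

lemma kron_mult_kron:
  fixes A B C D :: "'a::comm_semiring_0 mat"
  assumes A: "A \<in> carrier_mat a1 a2" and C: "C \<in> carrier_mat a2 a3"
    and B: "B \<in> carrier_mat b1 b2" and D: "D \<in> carrier_mat b2 b3"
  shows "kron A B * kron C D = kron (A * C) (B * D)"
proof (rule eq_matI)
  fix i j assume "i < dim_row (kron (A * C) (B * D))" "j < dim_col (kron (A * C) (B * D))"
  then have i: "i < a1 * b1" and j: "j < a3 * b3" using A B C D by auto
  have "(kron A B * kron C D) $$ (i, j)
      = (\<Sum>k<a2 * b2. (A $$ (i div b1, k div b2) * B $$ (i mod b1, k mod b2)) *
          (C $$ (k div b2, j div b3) * D $$ (k mod b2, j mod b3)))"
    using A B C D i j by (simp add: scalar_prod_def atLeast0LessThan index_kron)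
  also have "\<dots> = (\<Sum>k<a2. \<Sum>l<b2. (A $$ (i div b1, k) * B $$ (i mod b1, l)) *
      (C $$ (k, j div b3) * D $$ (l, j mod b3)))"
    by (rule sum_lessThan_mult_div_mod)
  also have "\<dots> = (\<Sum>k<a2. A $$ (i div b1, k) * C $$ (k, j div b3)) *
      (\<Sum>l<b2. B $$ (i mod b1, l) * D $$ (l, j mod b3))"
    by (simp add: sum_product mult_ac)
  also have "\<dots> = kron (A * C) (B * D) $$ (i, j)"
    using A B C D i j div_mod_less_of_less_mult[OF i] div_mod_less_of_less_mult[OF j]
    by (simp add: index_kron scalar_prod_def atLeast0LessThan)
  finally show "(kron A B * kron C D) $$ (i, j) = kron (A * C) (B * D) $$ (i, j)" .
qed (use A B C D in auto)

lemma kron_smult_left: "kron (c \<cdot>\<^sub>m A) B = c \<cdot>\<^sub>m kron (A :: 'a::comm_semiring_0 mat) B"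
  by (rule eq_matI) (auto simp: index_kron mult_ac dest!: div_mod_less_of_less_mult)

lemma kron_smult_right: "kron A (c \<cdot>\<^sub>m B) = c \<cdot>\<^sub>m kron (A :: 'a::comm_semiring_0 mat) B"
  by (rule eq_matI) (auto simp: index_kron mult_ac dest!: div_mod_less_of_less_mult)

lemma kron_one_mat: "b > 0 \<Longrightarrow> kron (1\<^sub>m a) (1\<^sub>m b) = (1\<^sub>m (a * b) :: 'a::semiring_1 mat)"
  by (rule eq_matI) (auto simp: index_kron dest!: div_mod_less_of_less_mult, metis div_mult_mod_eq)

lemma smult_smult_mat: "a \<cdot>\<^sub>m (b \<cdot>\<^sub>m M) = (a * b :: 'a::semigroup_mult) \<cdot>\<^sub>m M"
  by (rule eq_matI) (auto simp: mult.assoc)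

lemma one_smult_mat: "(1 :: 'a::monoid_mult) \<cdot>\<^sub>m M = M"
  by (rule eq_matI) auto

lemma eq_neg_self_iff: "(x :: 'a::{idom, ring_char_0}) = - x \<longleftrightarrow> x = 0"
proof
  assume "x = - x"
  then have "x + x = 0" by (simp add: eq_neg_iff_add_eq_0)
  then have "2 * x = 0" by (simp only: mult_2)
  then show "x = 0" by simp
qed simp

lemma commuting_involutions_not_anticommute:
  fixes M N :: "'a::{idom, ring_char_0} mat"
  assumes M: "M \<in> carrier_mat n n" and N: "N \<in> carrier_mat n n" and "n > 0"
    and MM: "M * M = 1\<^sub>m n" and NN: "N * N = 1\<^sub>m n" and comm: "M * N = N * M"
  shows "M * N \<noteq> - (N * M)"
proof
  assume "M * N = - (N * M)"
  then have MN: "M * N = - (M * N)"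
    using comm by simp
  have "M * N = 0\<^sub>m n n"
  proof (rule eq_matI)
    fix i j assume "i < dim_row (0\<^sub>m n n :: 'a mat)" "j < dim_col (0\<^sub>m n n :: 'a mat)"
    then have "(M * N) $$ (i, j) = - ((M * N) $$ (i, j))"
      using M N arg_cong[OF MN, of "\<lambda>A. A $$ (i, j)"] by simp
    then show "(M * N) $$ (i, j) = 0\<^sub>m n n $$ (i, j)"
      using \<open>i < dim_row _\<close> \<open>j < dim_col _\<close> by (simp add: eq_neg_self_iff)
  qed (use M N in auto)
  have "N = (M * M) * N"
    using MM N by simp
  also have "\<dots> = M * (M * N)"
    using M N by simp
  also have "\<dots> = 0\<^sub>m n n"
    using M \<open>M * N = 0\<^sub>m n n\<close> by simp
  finally have "N = 0\<^sub>m n n" .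
  with NN have "(1\<^sub>m n :: 'a mat) $$ (0, 0) = 0\<^sub>m n n $$ (0, 0)"
    by simp
  then show False
    using \<open>n > 0\<close> by simp
qed

lemma sum_Pow_power_card:
  "finite A \<Longrightarrow> (\<Sum>X\<in>Pow A. x ^ card X) = (x + 1 :: 'a::comm_semiring_1) ^ card A"
  using prod_add[of A "\<lambda>_. x" "\<lambda>_. 1"] by simp

definition pauli_anticomm :: "pauli \<Rightarrow> pauli \<Rightarrow> bool" where
  "pauli_anticomm p q \<longleftrightarrow> p \<noteq> I \<and> q \<noteq> I \<and> p \<noteq> q"

lemma pauli_matrix_carrier: "pauli_matrix p \<in> carrier_mat 2 2"
  by (cases p) (auto simp: pauli_matrix_def mat_of_rows_list_def)

lemma pauli_matrix_square: "pauli_matrix p * pauli_matrix p = 1\<^sub>m 2"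
  by (cases p) (auto intro!: eq_matI simp: pauli_matrix_def mat_of_rows_list_def
      scalar_prod_def lessThan_def numeral_2_eq_2 less_Suc_eq)

lemma pauli_matrix_commute:
  "pauli_matrix p * pauli_matrix q =
     (if pauli_anticomm p q then -1 else 1) \<cdot>\<^sub>m (pauli_matrix q * pauli_matrix p)"
  by (cases p; cases q) (auto intro!: eq_matI simp: pauli_matrix_def mat_of_rows_list_def
      pauli_anticomm_def scalar_prod_def lessThan_def numeral_2_eq_2 less_Suc_eq)

definition anticommuting_sites :: "pauli list \<Rightarrow> pauli list \<Rightarrow> nat set" where
  "anticommuting_sites P Q = {j. j < length P \<and> pauli_anticomm (P ! j) (Q ! j)}"

lemma card_anticommuting_sites_eq_length_filter:
  assumes "length P = length Q"
  shows "card (anticommuting_sites P Q) = length (filter (case_prod pauli_anticomm) (zip P Q))"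
proof -
  have "anticommuting_sites P Q = {i. i < length (zip P Q) \<and> case_prod pauli_anticomm (zip P Q ! i)}"
    using assms by (auto simp: anticommuting_sites_def)
  then show ?thesis
    by (simp add: length_filter_conv_card)
qed

lemma card_anticommuting_sites_Cons:
  "length P = length Q \<Longrightarrow> card (anticommuting_sites (p # P) (q # Q)) =
    (if pauli_anticomm p q then 1 else 0) + card (anticommuting_sites P Q)"
  by (simp add: card_anticommuting_sites_eq_length_filter)

lemma pauli_string_matrix_Cons:
  "pauli_string_matrix (p # P) = kron (pauli_matrix p) (pauli_string_matrix P)"
  by (simp add: pauli_string_matrix_def)

lemma pauli_string_matrix_carrier:
  "pauli_string_matrix P \<in> carrier_mat (2 ^ length P) (2 ^ length P)"
proof (induction P)
  case Nil
  then show ?case by (simp add: pauli_string_matrix_def)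
next
  case (Cons p P)
  then show ?case
    using pauli_matrix_carrier[of p] by (auto simp: pauli_string_matrix_Cons intro!: carrier_matI)
qed

lemma pauli_string_matrix_mult_Cons:
  "length P = length Q \<Longrightarrow>
   pauli_string_matrix (p # P) * pauli_string_matrix (q # Q) =
     kron (pauli_matrix p * pauli_matrix q) (pauli_string_matrix P * pauli_string_matrix Q)"
  unfolding pauli_string_matrix_Cons using pauli_string_matrix_carrier[of Q]
  by (intro kron_mult_kron[OF pauli_matrix_carrier pauli_matrix_carrier pauli_string_matrix_carrier]) simp

lemma pauli_string_matrix_square:
  "pauli_string_matrix P * pauli_string_matrix P = 1\<^sub>m (2 ^ length P)"
proof (induction P)
  case Nil
  then show ?case by (simp add: pauli_string_matrix_def)
next
  case (Cons p P)
  then show ?case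
    by (simp add: pauli_string_matrix_mult_Cons pauli_matrix_square kron_one_mat)
qed

lemma pauli_string_matrix_commute:
  "length P = length Q \<Longrightarrow>
   pauli_string_matrix P * pauli_string_matrix Q =
     (-1) ^ card (anticommuting_sites P Q) \<cdot>\<^sub>m (pauli_string_matrix Q * pauli_string_matrix P)"
proof (induction P Q rule: list_induct2)
  case Nil
  then show ?case by (simp add: pauli_string_matrix_def anticommuting_sites_def one_smult_mat)
next
  case (Cons p P q Q)
  have sign_Cons: "(-1) ^ card (anticommuting_sites P Q) * (if pauli_anticomm p q then -1 else 1) =
      ((-1) ^ card (anticommuting_sites (p # P) (q # Q)) :: complex)"
    by (simp add: card_anticommuting_sites_Cons Cons(1))
  have "pauli_string_matrix (p # P) * pauli_string_matrix (q # Q) =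
      kron ((if pauli_anticomm p q then -1 else 1) \<cdot>\<^sub>m (pauli_matrix q * pauli_matrix p))
        ((-1) ^ card (anticommuting_sites P Q) \<cdot>\<^sub>m (pauli_string_matrix Q * pauli_string_matrix P))"
    by (simp only: pauli_string_matrix_mult_Cons[OF Cons(1)] pauli_matrix_commute[of p q] Cons(2))
  also have "\<dots> = (-1) ^ card (anticommuting_sites (p # P) (q # Q)) \<cdot>\<^sub>m
      kron (pauli_matrix q * pauli_matrix p) (pauli_string_matrix Q * pauli_string_matrix P)"
    by (simp only: kron_smult_left kron_smult_right smult_smult_mat sign_Cons)
  also have "\<dots> = (-1) ^ card (anticommuting_sites (p # P) (q # Q)) \<cdot>\<^sub>m
      (pauli_string_matrix (q # Q) * pauli_string_matrix (p # P))"
    by (simp only: pauli_string_matrix_mult_Cons[OF Cons(1)[symmetric]])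
  finally show ?case .
qed

lemma anticommute_iff_odd_card_anticommuting_sites:
  assumes "length P = length Q"
  shows "anticommute P Q \<longleftrightarrow> odd (card (anticommuting_sites P Q))"
proof -
  define M N where "M = pauli_string_matrix P" and "N = pauli_string_matrix Q"
  have carrier: "M \<in> carrier_mat (2 ^ length P) (2 ^ length P)"
    "N \<in> carrier_mat (2 ^ length P) (2 ^ length P)"
    using assms pauli_string_matrix_carrier[of P] pauli_string_matrix_carrier[of Q]
    by (simp_all add: M_def N_def)
  have "M * M = 1\<^sub>m (2 ^ length P)" "N * N = 1\<^sub>m (2 ^ length P)"
    using assms pauli_string_matrix_square[of P] pauli_string_matrix_square[of Q]
    by (simp_all add: M_def N_def)
  moreover have "M * N = (-1) ^ card (anticommuting_sites P Q) \<cdot>\<^sub>m (N * M)"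
    using pauli_string_matrix_commute[OF assms] by (simp add: M_def N_def)
  ultimately show ?thesis
    using commuting_involutions_not_anticommute[OF carrier] carrier
    by (auto simp: anticommute_def M_def[symmetric] N_def[symmetric] one_smult_mat)
qed

lemma anticommuting_sites_subset_supp: "anticommuting_sites P Q \<subseteq> supp P"
  by (auto simp: anticommuting_sites_def supp_def pauli_anticomm_def)

lemma pauli_neq_I_iff: "p \<noteq> I \<longleftrightarrow> p \<in> {X, Y, Z}"
  by (cases p) auto

lemma LP_agreeing_eq:
  assumes "A \<subseteq> supp P" and "length Q = length P"
  shows "{a \<in> LP P A. A \<subseteq> supp Q \<and> (\<forall>j\<in>A. Q ! j = a j)} =
    (if A \<subseteq> anticommuting_sites P Q then {restrict ((!) Q) A} else {})"
proof -
  have "a \<in> LP P A \<and> A \<subseteq> supp Q \<and> (\<forall>j\<in>A. Q ! j = a j) \<longleftrightarrow>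
      A \<subseteq> anticommuting_sites P Q \<and> a = restrict ((!) Q) A" for a
    using assms
    by (auto simp: LP_def supp_def anticommuting_sites_def pauli_anticomm_def PiE_iff extensional_def
        pauli_neq_I_iff)
  then show ?thesis
    by auto
qed

lemma FG_add_mset:
  assumes "A \<subseteq> supp P" and "length Q = length P"
  shows "FG (add_mset Q G) P A = FG G P A + (if A \<subseteq> anticommuting_sites P Q then 1 else 0)"
proof -
  let ?agrees = "\<lambda>a. A \<subseteq> supp Q \<and> (\<forall>j\<in>A. Q ! j = a j)"
  have "finite (A \<rightarrow>\<^sub>E {X, Y, Z})"
    using finite_subset[OF assms(1)] by (simp add: supp_def finite_PiE)
  then have "finite (LP P A)"
    by (simp add: LP_def)
  have "DG (add_mset Q G) A a = DG G A a + of_bool (?agrees a)" for a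
    by (simp add: DG_def)
  then have "FG (add_mset Q G) P A = FG G P A + (\<Sum>a\<in>LP P A. of_bool (?agrees a))"
    by (simp add: FG_def sum.distrib)
  also have "(\<Sum>a\<in>LP P A. of_bool (?agrees a)) = card {a \<in> LP P A. ?agrees a}"
    using \<open>finite (LP P A)\<close> by (simp add: sum_of_bool_eq Int_def)
  finally show ?thesis
    using LP_agreeing_eq[OF assms] by simp
qed

lemma ZG_add_mset:
  assumes "length Q = length P"
  shows "ZG (add_mset Q G) P = ZG G P + (-1) ^ card (anticommuting_sites P Q)"
proof -
  let ?S = "anticommuting_sites P Q"
  have "ZG (add_mset Q G) P =
      (\<Sum>A\<in>Pow (supp P). (-2) ^ card A * int (FG G P A) + (if A \<subseteq> ?S then (-2) ^ card A else 0))"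
    unfolding ZG_def by (intro sum.cong) (auto simp: FG_add_mset[OF _ assms] algebra_simps)
  also have "\<dots> = ZG G P + (\<Sum>A\<in>Pow (supp P). if A \<subseteq> ?S then (-2) ^ card A else 0)"
    by (simp add: sum.distrib ZG_def)
  also have "(\<Sum>A\<in>Pow (supp P). if A \<subseteq> ?S then (-2) ^ card A else 0) =
      (\<Sum>A\<in>Pow ?S. (-2 :: int) ^ card A)"
    using anticommuting_sites_subset_supp[of P Q]
    by (intro sum.mono_neutral_cong_right) (auto simp: supp_def)
  also have "\<dots> = (-1) ^ card ?S"
    using finite_subset[OF anticommuting_sites_subset_supp] by (simp add: sum_Pow_power_card supp_def)
  finally show ?thesis .
qed

lemma ZG_eq_size_minus_twice_anticommuting:
  "\<forall>Q\<in>#G. length Q = length P \<Longrightarrow>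
   ZG G P = int (size G) - 2 * int (size {#Q \<in># G. anticommute P Q#})"
proof (induction G)
  case empty
  then show ?case by (simp add: ZG_def FG_def DG_def)
next
  case (add Q G)
  then show ?case
    by (auto simp: ZG_add_mset anticommute_iff_odd_card_anticommuting_sites minus_one_power_iff)
qed

theorem theorem1:
  fixes n :: nat and G :: "pauli list multiset" and P :: "pauli list"
  assumes "length P = n"
    and "\<forall>Q\<in>#G. length Q = n"
  shows "antiG G P = real (size (filter_mset (\<lambda>Q. anticommute P Q) G))"
  using ZG_eq_size_minus_twice_anticommuting[of G P] assms by (simp add: antiG_def)

end
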